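(* Let $a_i<b_i$ ($i=1,\dots,n$) be real numbers and let $u:\prod_{i=1}^n[a_i,b_i]\to[0,\infty]$ be a convex function. Then for every $x=(x_1,\dots,x_n)$ in the open box $\prod_{i=1}^n(a_i,b_i)$, \[ u(x)\le \int_{\prod_{i=1}^n[a_i,b_i]}u\,d\mathbf{x}\cdot\frac{1}{\prod_{i=1}^n\min\{x_i-a_i,\;b_i-x_i\}}, \] where $d\mathbf{x}$ denotes the $n$-dimensional Lebesgue measure. (At boundary points of the box the right-hand side is $+\infty$ and the inequality is trivial.)
   Context: A convex function with values in $[0,\infty]$ means $u((1-t)x+ty)\le(1-t)u(x)+tu(y)$ for all $x,y$ and $t\in[0,1]$, with the usual conventions for $+\infty$. *)

theory Defs
  imports "HOL-Analysis.Analysis"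
begin

text \<open>Convexity of a function with values in [0,\<infinity>] (ennreal) on a set S,
  with the usual ennreal conventions for \<infinity> (in particular 0 * \<infinity> = 0).\<close>
definition convex_on_ennreal :: "'a::real_vector set \<Rightarrow> ('a \<Rightarrow> ennreal) \<Rightarrow> bool" where
  "convex_on_ennreal S u \<longleftrightarrow>
     (\<forall>x\<in>S. \<forall>y\<in>S. \<forall>t::real. 0 \<le> t \<and> t \<le> 1 \<longrightarrow>
        u ((1 - t) *\<^sub>R x + t *\<^sub>R y) \<le> ennreal (1 - t) * u x + ennreal t * u y)"

end

theory Submission
  imports Defs
begin

text \<open>
  Let \<open>Q\<close> be the cube centred at \<open>x\<close> with half side lengths
  \<open>r\<^sub>i = min (x\<^sub>i - a\<^sub>i) (b\<^sub>i - x\<^sub>i)\<close>, so that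
  \<open>Q \<subseteq> [a,b]\<close> and \<open>|Q| = 2\<^sup>n \<Prod> r\<^sub>i\<close>. For a level \<open>c < u x\<close>
  the sublevel set \<open>{u \<le> c} \<inter> Q\<close> is convex, hence measurable, and it cannot contain
  a point \<open>z\<close> together with its reflection \<open>2x - z\<close>: midpoint convexity
  would give \<open>u x \<le> c\<close>. So the superlevel set \<open>A = {u > c} \<inter> Q\<close> and its
  reflection cover \<open>Q\<close>, whence \<open>|Q| \<le> 2|A|\<close> and
  \<open>c |Q| \<le> 2 \<integral>\<^sub>A u \<le> 2 \<integral> u\<close>. Letting \<open>c\<close> increase to
  \<open>u x\<close> gives \<open>u x |Q| \<le> 2 \<integral> u\<close>, and \<open>|Q| \<ge> 2 \<Prod> r\<^sub>i\<close>.
\<close>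

lemma ennreal_convex_combination_self:
  assumes "0 \<le> t" "t \<le> 1"
  shows "ennreal (1 - t) * c + ennreal t * c = c"
  using assms by (simp flip: distrib_right ennreal_plus)

lemma convex_on_ennreal_sublevel:
  assumes "convex_on_ennreal S u" "convex T" "T \<subseteq> S"
  shows "convex {z \<in> T. u z \<le> c}"
  unfolding convex_alt
proof (intro ballI allI impI)
  fix z w and t :: real
  assume z: "z \<in> {z \<in> T. u z \<le> c}" and w: "w \<in> {z \<in> T. u z \<le> c}" and t: "0 \<le> t \<and> t \<le> 1"
  have "u ((1 - t) *\<^sub>R z + t *\<^sub>R w) \<le> ennreal (1 - t) * u z + ennreal t * u w"
    using assms(1,3) z w t unfolding convex_on_ennreal_def by auto
  also have "\<dots> \<le> ennreal (1 - t) * c + ennreal t * c"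
    using z w by (intro add_mono mult_left_mono) auto
  also have "\<dots> = c"
    using t by (simp add: ennreal_convex_combination_self)
  finally show "(1 - t) *\<^sub>R z + t *\<^sub>R w \<in> {z \<in> T. u z \<le> c}"
    using z w t \<open>convex T\<close> unfolding convex_alt by auto
qed

lemma convex_on_ennreal_le_reflection:
  assumes "convex_on_ennreal S u" "z \<in> S" "2 *\<^sub>R x - z \<in> S"
    and "u z \<le> c" "u (2 *\<^sub>R x - z) \<le> c"
  shows "u x \<le> c"
proof -
  have "u ((1 - 1/2) *\<^sub>R z + (1/2) *\<^sub>R (2 *\<^sub>R x - z))
      \<le> ennreal (1 - 1/2) * u z + ennreal (1/2) * u (2 *\<^sub>R x - z)"
    by (rule assms(1)[unfolded convex_on_ennreal_def, rule_format]) (use assms(2,3) in auto)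
  moreover have "(1 - 1/2) *\<^sub>R z + (1/2) *\<^sub>R (2 *\<^sub>R x - z) = x"
    by (simp add: algebra_simps)
  ultimately have "u x \<le> ennreal (1 - 1/2) * u z + ennreal (1/2) * u (2 *\<^sub>R x - z)"
    by simp
  also have "\<dots> \<le> ennreal (1 - 1/2) * c + ennreal (1/2) * c"
    using assms(4,5) by (intro add_mono mult_left_mono) auto
  also have "\<dots> = c"
    by (rule ennreal_convex_combination_self) simp_all
  finally show ?thesis .
qed

lemma convex_on_ennreal_reflection:
  assumes "convex_on_ennreal S u"
  shows "convex_on_ennreal {z. 2 *\<^sub>R x - z \<in> S} (\<lambda>z. u (2 *\<^sub>R x - z))"
  unfolding convex_on_ennreal_def
proof (intro ballI allI impI)
  fix z w and t :: real
  assume "z \<in> {z. 2 *\<^sub>R x - z \<in> S}" "w \<in> {z. 2 *\<^sub>R x - z \<in> S}" "0 \<le> t \<and> t \<le> 1"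
  then have "u ((1 - t) *\<^sub>R (2 *\<^sub>R x - z) + t *\<^sub>R (2 *\<^sub>R x - w))
      \<le> ennreal (1 - t) * u (2 *\<^sub>R x - z) + ennreal t * u (2 *\<^sub>R x - w)"
    using assms unfolding convex_on_ennreal_def by auto
  moreover have "(1 - t) *\<^sub>R (2 *\<^sub>R x - z) + t *\<^sub>R (2 *\<^sub>R x - w)
      = 2 *\<^sub>R x - ((1 - t) *\<^sub>R z + t *\<^sub>R w)"
    by (simp add: algebra_simps)
  ultimately show "u (2 *\<^sub>R x - ((1 - t) *\<^sub>R z + t *\<^sub>R w))
      \<le> ennreal (1 - t) * u (2 *\<^sub>R x - z) + ennreal t * u (2 *\<^sub>R x - w)"
    by simp
qed

lemma convex_on_ennreal_superlevel_in_sets_lebesgue: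
  fixes Q :: "'a::euclidean_space set"
  assumes u: "convex_on_ennreal S u" and QS: "Q \<subseteq> S" and Q: "convex Q" "bounded Q"
  shows "{z \<in> Q. c < u z} \<in> sets lebesgue"
proof -
  have "Q \<in> sets lebesgue" "{z \<in> Q. u z \<le> c} \<in> sets lebesgue"
    using measurable_convex[OF convex_on_ennreal_sublevel[OF u Q(1) QS]] measurable_convex[OF Q]
      Q(2) by (auto simp: fmeasurable_def intro: bounded_subset)
  moreover have "{z \<in> Q. c < u z} = Q - {z \<in> Q. u z \<le> c}"
    by (auto simp: not_le)
  ultimately show ?thesis
    by simp
qed

lemma convex_on_ennreal_emeasure_le_twice_superlevel:
  fixes Q :: "'a::euclidean_space set"
  assumes u: "convex_on_ennreal S u" and QS: "Q \<subseteq> S" and Q: "convex Q" "bounded Q"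
    and sym: "\<And>z. z \<in> Q \<Longrightarrow> 2 *\<^sub>R x - z \<in> Q" and "c < u x"
  shows "emeasure lebesgue Q \<le> 2 * emeasure lebesgue {z \<in> Q. c < u z}"
proof -
  define R where "R z = 2 *\<^sub>R x - z" for z
  define A where "A = {z \<in> Q. c < u z}"
  have R_involution: "R (R z) = z" for z by (simp add: R_def)
  have A_meas: "A \<in> sets lebesgue"
    unfolding A_def by (rule convex_on_ennreal_superlevel_in_sets_lebesgue[OF u QS Q])
  have R_affine: "R = (\<lambda>z. (-1) *\<^sub>R z + 2 *\<^sub>R x)"
    by (simp add: R_def fun_eq_iff)
  have "convex_on_ennreal {z. R z \<in> S} (\<lambda>z. u (R z))"
    unfolding R_def by (rule convex_on_ennreal_reflection[OF u])
  moreover have "Q \<subseteq> {z. R z \<in> S}"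
    using sym QS by (auto simp: R_def)
  ultimately have B_meas: "{z \<in> Q. c < u (R z)} \<in> sets lebesgue"
    using Q by (rule convex_on_ennreal_superlevel_in_sets_lebesgue)
  have "{z \<in> Q. c < u (R z)} = R ` A"
    using sym R_involution unfolding A_def R_def by (auto simp: image_iff) (metis R_involution R_def)
  then have B_emeasure: "emeasure lebesgue {z \<in> Q. c < u (R z)} = emeasure lebesgue A"
    using emeasure_lebesgue_affine[of "-1" "2 *\<^sub>R x" A] by (simp add: R_affine)
  have cover: "Q \<subseteq> A \<union> {z \<in> Q. c < u (R z)}"
  proof
    fix z assume "z \<in> Q"
    then have "z \<in> S" "R z \<in> S" using sym QS by (auto simp: R_def)
    then have "\<not> (u z \<le> c \<and> u (R z) \<le> c)"
      using convex_on_ennreal_le_reflection[OF u] \<open>c < u x\<close> by (force simp: R_def)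
    with \<open>z \<in> Q\<close> show "z \<in> A \<union> {z \<in> Q. c < u (R z)}"
      by (auto simp: A_def not_le)
  qed
  have "emeasure lebesgue Q \<le> emeasure lebesgue (A \<union> {z \<in> Q. c < u (R z)})"
    using cover A_meas B_meas by (intro emeasure_mono) auto
  also have "\<dots> \<le> emeasure lebesgue A + emeasure lebesgue {z \<in> Q. c < u (R z)}"
    using A_meas B_meas by (rule emeasure_subadditive)
  finally show ?thesis
    by (simp add: B_emeasure A_def mult_2)
qed

lemma convex_on_ennreal_mult_emeasure_le_nn_integral:
  fixes Q :: "'a::euclidean_space set"
  assumes u: "convex_on_ennreal S u" and QS: "Q \<subseteq> S" and Q: "convex Q" "bounded Q"
    and sym: "\<And>z. z \<in> Q \<Longrightarrow> 2 *\<^sub>R x - z \<in> Q"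
  shows "u x * emeasure lebesgue Q \<le> 2 * (\<integral>\<^sup>+ y \<in> S. u y \<partial>lebesgue)"
proof -
  have "c * emeasure lebesgue Q \<le> 2 * (\<integral>\<^sup>+ y \<in> S. u y \<partial>lebesgue)" if "c < u x" for c
  proof -
    define A where "A = {z \<in> Q. c < u z}"
    have "A \<in> sets lebesgue"
      unfolding A_def by (rule convex_on_ennreal_superlevel_in_sets_lebesgue[OF u QS Q])
    have "c * emeasure lebesgue Q \<le> c * (2 * emeasure lebesgue A)"
      unfolding A_def using convex_on_ennreal_emeasure_le_twice_superlevel[OF u QS Q sym \<open>c < u x\<close>]
      by (rule mult_left_mono) simp_all
    also have "\<dots> = 2 * (\<integral>\<^sup>+ y. c * indicator A y \<partial>lebesgue)"
      using \<open>A \<in> sets lebesgue\<close> by (simp add: nn_integral_cmult_indicator ac_simps)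
    also have "\<dots> \<le> 2 * (\<integral>\<^sup>+ y \<in> S. u y \<partial>lebesgue)"
      using QS by (intro mult_left_mono nn_integral_mono) (auto simp: A_def indicator_def less_imp_le)
    finally show ?thesis .
  qed
  then have "(SUP c\<in>{..<u x}. c * emeasure lebesgue Q) \<le> 2 * (\<integral>\<^sup>+ y \<in> S. u y \<partial>lebesgue)"
    by (intro SUP_least) simp
  then show ?thesis
    by (simp flip: SUP_mult_right_ennreal)
qed

lemma emeasure_lebesgue_cbox_centered_cart:
  fixes x r :: "real ^ 'n"
  assumes "\<And>i. 0 \<le> r $ i"
  shows "emeasure lebesgue (cbox (x - r) (x + r)) = ennreal (\<Prod>i\<in>UNIV. 2 * r $ i)"
proof -
  have "x \<in> cbox (x - r) (x + r)"
    using assms by (simp add: mem_box_cart)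
  then have "cbox (x - r) (x + r) \<noteq> {}"
    by blast
  then have "measure lborel (cbox (x - r) (x + r)) = (\<Prod>i\<in>UNIV. 2 * r $ i)"
    by (simp add: content_cbox_cart)
  moreover have "emeasure lborel (cbox (x - r) (x + r)) = ennreal (measure lborel (cbox (x - r) (x + r)))"
    by (rule emeasure_eq_ennreal_measure) (use emeasure_lborel_cbox_finite in \<open>auto simp: less_top\<close>)
  ultimately show ?thesis
    by simp
qed

lemma cbox_centered_reflection:
  fixes x r z :: "'a::euclidean_space"
  assumes "z \<in> cbox (x - r) (x + r)"
  shows "2 *\<^sub>R x - z \<in> cbox (x - r) (x + r)"
  using assms by (auto simp: mem_box algebra_simps)

lemma cbox_centered_subset_cart:
  fixes a b x r :: "real ^ 'n"
  assumes "\<And>i. r $ i \<le> x $ i - a $ i" "\<And>i. r $ i \<le> b $ i - x $ i"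
  shows "cbox (x - r) (x + r) \<subseteq> cbox a b"
proof
  fix z assume "z \<in> cbox (x - r) (x + r)"
  then have "x $ i - r $ i \<le> z $ i \<and> z $ i \<le> x $ i + r $ i" for i
    by (simp add: mem_box_cart)
  then show "z \<in> cbox a b"
    using assms by (simp add: mem_box_cart) (smt (verit))
qed

theorem mainTheorem1:
  fixes a b x :: "real ^ 'n" and u :: "real ^ 'n \<Rightarrow> ennreal"
  assumes "\<forall>i. a $ i < b $ i"
    and "convex_on_ennreal (cbox a b) u"
    and "x \<in> box a b"
  shows "u x \<le> (\<integral>\<^sup>+ y \<in> cbox a b. u y \<partial>lebesgue)
                  * (1 / ennreal (\<Prod>i\<in>UNIV. min (x $ i - a $ i) (b $ i - x $ i)))"
proof -
  define r where "r = (\<chi> i. min (x $ i - a $ i) (b $ i - x $ i))"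
  define P where "P = (\<Prod>i\<in>UNIV. r $ i)"
  define Q where "Q = cbox (x - r) (x + r)"
  define I where "I = (\<integral>\<^sup>+ y \<in> cbox a b. u y \<partial>lebesgue)"
  have r_pos: "0 < r $ i" for i
    using \<open>x \<in> box a b\<close> by (simp add: r_def mem_box_cart)
  then have "0 < P"
    by (simp add: P_def prod_pos)
  have "Q \<subseteq> cbox a b"
    unfolding Q_def by (rule cbox_centered_subset_cart) (simp_all add: r_def)
  then have integral_bound: "u x * emeasure lebesgue Q \<le> 2 * I"
    unfolding I_def using assms(2) cbox_centered_reflection
    by (intro convex_on_ennreal_mult_emeasure_le_nn_integral) (auto simp: Q_def)
  have "2 * P \<le> (\<Prod>i\<in>UNIV. 2 * r $ i)"
    using \<open>0 < P\<close> power_increasing[of 1 "CARD('n)" "2::real"]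
    by (simp add: P_def prod.distrib Suc_leI)
  then have measure_bound: "ennreal (2 * P) \<le> emeasure lebesgue Q"
    unfolding Q_def using r_pos
    by (subst emeasure_lebesgue_cbox_centered_cart) (simp_all add: less_imp_le ennreal_leI)
  have "2 * (u x * ennreal P) = u x * ennreal (2 * P)"
    using \<open>0 < P\<close> by (simp add: ennreal_mult ac_simps)
  also have "\<dots> \<le> u x * emeasure lebesgue Q"
    using measure_bound by (rule mult_left_mono) simp
  also note integral_bound
  finally have "u x * ennreal P \<le> I"
    by (subst (asm) ennreal_mult_le_mult_iff) auto
  then have "u x * ennreal P / ennreal P \<le> I / ennreal P"
    by (rule divide_right_mono_ennreal)
  moreover have "u x * ennreal P / ennreal P = u x"
    using \<open>0 < P\<close> by (intro mult_divide_eq_ennreal) simp_all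
  ultimately show ?thesis
    by (simp add: ennreal_times_divide I_def P_def r_def)
qed

end
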